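(* Let $K\subset\mathbb{R}^n$ be a closed convex set and $\sigma>0$. For any fixed constants $C_1,C_2>0$ define $\varepsilon^\dagger=\sup\{\varepsilon>0:\varepsilon^2/\sigma^2\le C_1\log M^{\mathrm{loc}}(C_2\varepsilon)\}$. Then $\varepsilon^*\asymp\varepsilon^\dagger$, where $\varepsilon^*=\sup\{\varepsilon:\varepsilon^2/\sigma^2\le\log M^{\mathrm{loc}}(\varepsilon)\}$.
   Context: $M(\eta,T)$ is the maximal cardinality of a subset of $T$ with pairwise Euclidean distances $>\eta$; $M^{\mathrm{loc}}(\varepsilon)=\sup_{\theta\in K}M(\varepsilon/c^*,B(\theta,\varepsilon)\cap K)$, where $B$ is the closed Euclidean ball and $c^*$ a fixed sufficiently large absolute constant. $\asymp$ hides constants depending only on $C_1,C_2$. *)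

theory Defs
  imports Complex_Main
begin

text \<open>Euclidean space R^n, represented dimension-explicitly (so that constants
  can be required to be independent of n): vectors are functions nat => real
  vanishing outside the first n coordinates.\<close>

definition Rn :: "nat \<Rightarrow> (nat \<Rightarrow> real) set" where
  "Rn n = {x. \<forall>i\<ge>n. x i = 0}"

definition edist :: "nat \<Rightarrow> (nat \<Rightarrow> real) \<Rightarrow> (nat \<Rightarrow> real) \<Rightarrow> real" where
  "edist n x y = sqrt (\<Sum>i<n. (x i - y i)^2)"

definition econvex :: "(nat \<Rightarrow> real) set \<Rightarrow> bool" where
  "econvex K \<longleftrightarrow> (\<forall>x\<in>K. \<forall>y\<in>K. \<forall>t::real. 0 \<le> t \<and> t \<le> 1 \<longrightarrow>
      (\<lambda>i. t * x i + (1 - t) * y i) \<in> K)"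

definition eclosed :: "nat \<Rightarrow> (nat \<Rightarrow> real) set \<Rightarrow> bool" where
  "eclosed n K \<longleftrightarrow> (\<forall>s x. (\<forall>k. s k \<in> K) \<and> x \<in> Rn n \<and>
      (\<lambda>k. edist n (s k) x) \<longlonglongrightarrow> 0 \<longrightarrow> x \<in> K)"

definition eball :: "nat \<Rightarrow> (nat \<Rightarrow> real) \<Rightarrow> real \<Rightarrow> (nat \<Rightarrow> real) set" where
  "eball n \<theta> r = {x \<in> Rn n. edist n \<theta> x \<le> r}"

definition pack :: "nat \<Rightarrow> real \<Rightarrow> (nat \<Rightarrow> real) set \<Rightarrow> real" where
  "pack n \<eta> T = Sup {real (card S) | S. S \<subseteq> T \<and> finite S \<and>
      (\<forall>x\<in>S. \<forall>y\<in>S. x \<noteq> y \<longrightarrow> edist n x y > \<eta>)}"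

text \<open>Local packing number M^loc(eps) with constant c (= c^*).\<close>
definition Mloc :: "nat \<Rightarrow> real \<Rightarrow> (nat \<Rightarrow> real) set \<Rightarrow> real \<Rightarrow> real" where
  "Mloc n c K \<epsilon> = (SUP \<theta>\<in>K. pack n (\<epsilon> / c) (eball n \<theta> \<epsilon> \<inter> K))"

definition sup0 :: "real set \<Rightarrow> real" where
  "sup0 S = (if S = {} then 0 else Sup S)"

definition eps_star :: "nat \<Rightarrow> real \<Rightarrow> (nat \<Rightarrow> real) set \<Rightarrow> real \<Rightarrow> real" where
  "eps_star n c K \<sigma> = sup0 {\<epsilon>. \<epsilon>^2 / \<sigma>^2 \<le> ln (Mloc n c K \<epsilon>)}"

definition eps_dagger :: "nat \<Rightarrow> real \<Rightarrow> (nat \<Rightarrow> real) set \<Rightarrow> real \<Rightarrow> real \<Rightarrow> real \<Rightarrow> real" where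
  "eps_dagger n c K \<sigma> C1 C2 =
     sup0 {\<epsilon>. \<epsilon> > 0 \<and> \<epsilon>^2 / \<sigma>^2 \<le> C1 * ln (Mloc n c K (C2 * \<epsilon>))}"

end

theory Submission
  imports Defs "HOL-Library.FuncSet"
begin

(* Only three properties of r \<mapsto> M^loc(r) matter: it is at least 1 for r > 0, it equals 1 at
   r = 0, and it is nonincreasing on r > 0.  Monotonicity is where convexity enters: the homothety
   of ratio r'/r about \<theta> \<in> K maps K into itself and turns an (r/c)-separated subset of
   B(\<theta>, r) \<inter> K into an (r'/c)-separated subset of B(\<theta>, r') \<inter> K.  Counting the cells
   of a cubical grid shows that all packing numbers of balls are finite.

   For any nonincreasing f \<ge> 0 with f 0 = 0, put k = C1 C2^2.  If \<epsilon>^2/\<sigma>^2 \<le> C1 f(C2 \<epsilon>),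
   then \<delta> = C2 \<epsilon> / max 1 (sqrt k) satisfies \<delta>^2/\<sigma>^2 \<le> f(C2 \<epsilon>) \<le> f(\<delta>); conversely,
   if \<epsilon>^2/\<sigma>^2 \<le> f(\<epsilon>), then min 1 (sqrt k) \<epsilon> / C2 lies in the set defining \<epsilon>\<dagger>.
   Hence \<epsilon>* and \<epsilon>\<dagger> agree up to the factors C2 / max 1 (sqrt k) and C2 / min 1 (sqrt k),
   for every c* > 0. *)

lemma edist_nonneg: "0 \<le> edist n x y"
  by (simp add: edist_def sum_nonneg)

lemma edist_self [simp]: "edist n x x = 0"
  by (simp add: edist_def)

lemma coord_le_edist:
  assumes "i < n"
  shows "\<bar>x i - y i\<bar> \<le> edist n x y"
proof -
  have "(x i - y i)^2 \<le> (\<Sum>j<n. (x j - y j)^2)"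
    using assms by (intro member_le_sum) auto
  then have "sqrt ((x i - y i)^2) \<le> edist n x y"
    unfolding edist_def by (rule real_sqrt_le_mono)
  then show ?thesis
    by simp
qed

lemma edist_eq_0_imp_eq:
  assumes "x \<in> Rn n" "y \<in> Rn n" "edist n x y = 0"
  shows "x = y"
proof
  fix i
  show "x i = y i"
    using assms coord_le_edist[of i n x y] by (cases "i < n") (auto simp: Rn_def)
qed

lemma edist_le_sqrt_dim:
  assumes "0 \<le> h" "\<And>i. i < n \<Longrightarrow> \<bar>x i - y i\<bar> \<le> h"
  shows "edist n x y \<le> sqrt (real n) * h"
proof -
  have "(\<Sum>i<n. (x i - y i)^2) \<le> (\<Sum>i<n. h^2)"
  proof (rule sum_mono)
    fix i
    assume "i \<in> {..<n}"
    then have "\<bar>x i - y i\<bar>^2 \<le> h^2"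
      using assms(2) by (intro power_mono) auto
    then show "(x i - y i)^2 \<le> h^2"
      by simp
  qed
  then have "edist n x y \<le> sqrt (real n * h^2)"
    unfolding edist_def by simp
  then show ?thesis
    using assms(1) by (simp add: real_sqrt_mult)
qed

lemma edist_affine_combination:
  "edist n (\<lambda>i. t * x i + (1 - t) * z i) (\<lambda>i. t * y i + (1 - t) * z i) = \<bar>t\<bar> * edist n x y"
proof -
  have "(\<Sum>i<n. (t * x i + (1 - t) * z i - (t * y i + (1 - t) * z i))^2)
      = t^2 * (\<Sum>i<n. (x i - y i)^2)"
    by (simp add: sum_distrib_left power_mult_distrib right_diff_distrib[symmetric])
  then show ?thesis
    unfolding edist_def by (simp add: real_sqrt_mult)
qed

lemma edist_affine_combination_centre:
  "edist n z (\<lambda>i. t * x i + (1 - t) * z i) = \<bar>t\<bar> * edist n z x"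
  using edist_affine_combination[of n t z z x] by (simp add: algebra_simps)

definition packings :: "nat \<Rightarrow> real \<Rightarrow> (nat \<Rightarrow> real) set \<Rightarrow> (nat \<Rightarrow> real) set set" where
  "packings n \<eta> T = {S. S \<subseteq> T \<and> finite S \<and> (\<forall>x\<in>S. \<forall>y\<in>S. x \<noteq> y \<longrightarrow> \<eta> < edist n x y)}"

lemma pack_eq_SUP: "pack n \<eta> T = (SUP S\<in>packings n \<eta> T. real (card S))"
  unfolding pack_def packings_def by (simp only: setcompr_eq_image)

lemma packings_ne_empty [simp]: "packings n \<eta> T \<noteq> {}"
proof -
  have "{} \<in> packings n \<eta> T"
    by (simp add: packings_def)
  then show ?thesis
    by blast
qed

lemma inj_on_grid_cell:
  assumes S: "S \<in> packings n \<eta> T" and h: "0 < h" "sqrt (real n) * h < \<eta>"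
  shows "inj_on (\<lambda>x. restrict (\<lambda>i. \<lfloor>(x i - \<theta> i) / h\<rfloor>) {..<n}) S"
proof (rule inj_onI, rule ccontr)
  fix x y
  assume xy: "x \<in> S" "y \<in> S" "x \<noteq> y"
    and cell: "restrict (\<lambda>i. \<lfloor>(x i - \<theta> i) / h\<rfloor>) {..<n} = restrict (\<lambda>i. \<lfloor>(y i - \<theta> i) / h\<rfloor>) {..<n}"
  have "\<bar>x i - y i\<bar> \<le> h" if "i < n" for i
  proof -
    have "\<lfloor>(x i - \<theta> i) / h\<rfloor> = \<lfloor>(y i - \<theta> i) / h\<rfloor>"
      using fun_cong[OF cell, of i] that by simp
    then have "\<bar>(x i - \<theta> i) / h - (y i - \<theta> i) / h\<bar> < 1"
      by linarith
    then show ?thesis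
      using h by (simp add: diff_divide_distrib[symmetric] abs_divide)
  qed
  then have "edist n x y < \<eta>"
    using edist_le_sqrt_dim[of h n x y] h by simp
  moreover have "\<eta> < edist n x y"
    using S xy by (simp add: packings_def)
  ultimately show False
    by simp
qed

lemma grid_cell_in_box:
  assumes "x \<in> eball n \<theta> R" "0 < h"
  shows "restrict (\<lambda>i. \<lfloor>(x i - \<theta> i) / h\<rfloor>) {..<n} \<in> (\<Pi>\<^sub>E i\<in>{..<n}. {\<lfloor>- R / h\<rfloor>..\<lfloor>R / h\<rfloor>})"
proof -
  have "\<lfloor>(x i - \<theta> i) / h\<rfloor> \<in> {\<lfloor>- R / h\<rfloor>..\<lfloor>R / h\<rfloor>}" if "i < n" for i
  proof -
    have "\<bar>\<theta> i - x i\<bar> \<le> R"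
      using assms(1) coord_le_edist[OF that, of \<theta> x] by (simp add: eball_def)
    then have "- R \<le> x i - \<theta> i" "x i - \<theta> i \<le> R"
      by auto
    then show ?thesis
      unfolding atLeastAtMost_iff using assms(2) by (intro conjI floor_mono divide_right_mono) auto
  qed
  then show ?thesis
    by auto
qed

lemma card_packings_uniformly_bounded:
  assumes "0 < \<eta>"
  shows "\<exists>N. \<forall>\<theta> T S. T \<subseteq> eball n \<theta> R \<longrightarrow> S \<in> packings n \<eta> T \<longrightarrow> card S \<le> N"
proof -
  \<comment> \<open>Any mesh below \<eta> / sqrt n would do; this one is positive also for n = 0.\<close>
  define h where "h = \<eta> / (real n + 1)"
  have h: "0 < h"
    using assms by (simp add: h_def)
  have "sqrt (real n) < real n + 1"
    by (intro real_less_lsqrt) (simp_all add: power2_eq_square algebra_simps add_pos_nonneg)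
  then have "sqrt (real n) * h < (real n + 1) * h"
    using h by (rule mult_strict_right_mono)
  then have mesh: "sqrt (real n) * h < \<eta>"
    by (simp add: h_def)
  define G where "G = (\<Pi>\<^sub>E i\<in>{..<n}. {\<lfloor>- R / h\<rfloor>..\<lfloor>R / h\<rfloor>})"
  have "card S \<le> card G" if T: "T \<subseteq> eball n \<theta> R" and S: "S \<in> packings n \<eta> T" for \<theta> T S
  proof (rule card_inj_on_le)
    show "inj_on (\<lambda>x. restrict (\<lambda>i. \<lfloor>(x i - \<theta> i) / h\<rfloor>) {..<n}) S"
      using S h mesh by (rule inj_on_grid_cell)
    show "(\<lambda>x. restrict (\<lambda>i. \<lfloor>(x i - \<theta> i) / h\<rfloor>) {..<n}) ` S \<subseteq> G"
      unfolding G_def using S T by (intro image_subsetI grid_cell_in_box[OF _ h]) (auto simp: packings_def)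
    show "finite G"
      by (simp add: G_def finite_PiE)
  qed
  then show ?thesis
    by blast
qed

lemma pack_uniformly_bounded:
  assumes "0 < \<eta>"
  shows "\<exists>N. \<forall>\<theta> T. T \<subseteq> eball n \<theta> R \<longrightarrow> pack n \<eta> T \<le> N"
proof -
  obtain N where N: "\<And>\<theta> T S. T \<subseteq> eball n \<theta> R \<Longrightarrow> S \<in> packings n \<eta> T \<Longrightarrow> card S \<le> N"
    using card_packings_uniformly_bounded[OF assms] by blast
  have "pack n \<eta> T \<le> real N" if "T \<subseteq> eball n \<theta> R" for \<theta> T
    unfolding pack_eq_SUP using N[OF that] by (intro cSUP_least) auto
  then show ?thesis by blast
qed

lemma card_le_pack:
  assumes "0 < \<eta>" "T \<subseteq> eball n \<theta> R" "S \<in> packings n \<eta> T"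
  shows "real (card S) \<le> pack n \<eta> T"
proof -
  obtain N where N: "\<And>\<theta> T S. T \<subseteq> eball n \<theta> R \<Longrightarrow> S \<in> packings n \<eta> T \<Longrightarrow> card S \<le> N"
    using card_packings_uniformly_bounded[OF assms(1)] by blast
  have "bdd_above ((\<lambda>S. real (card S)) ` packings n \<eta> T)"
    using N[OF assms(2)] by (intro bdd_aboveI[of _ "real N"]) auto
  then show ?thesis
    unfolding pack_eq_SUP using assms(3) by (rule cSUP_upper2) simp
qed

lemma pack_le_Mloc:
  assumes "0 < c" "0 < \<epsilon>" "\<theta> \<in> K"
  shows "pack n (\<epsilon> / c) (eball n \<theta> \<epsilon> \<inter> K) \<le> Mloc n c K \<epsilon>"
proof -
  obtain N where N: "\<And>\<theta> T. T \<subseteq> eball n \<theta> \<epsilon> \<Longrightarrow> pack n (\<epsilon> / c) T \<le> N"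
    using pack_uniformly_bounded[of "\<epsilon> / c" n \<epsilon>] assms by auto
  have "bdd_above ((\<lambda>\<theta>. pack n (\<epsilon> / c) (eball n \<theta> \<epsilon> \<inter> K)) ` K)"
    using N[OF Int_lower1] by (intro bdd_aboveI[of _ N]) auto
  then show ?thesis
    unfolding Mloc_def by (rule cSUP_upper[OF assms(3)])
qed

lemma Mloc_ge_1:
  assumes "0 < c" "0 < \<epsilon>" "K \<subseteq> Rn n" "K \<noteq> {}"
  shows "1 \<le> Mloc n c K \<epsilon>"
proof -
  obtain \<theta> where \<theta>: "\<theta> \<in> K"
    using assms(4) by blast
  have "{\<theta>} \<in> packings n (\<epsilon> / c) (eball n \<theta> \<epsilon> \<inter> K)"
    using assms \<theta> by (auto simp: packings_def eball_def)
  then have "real (card {\<theta>}) \<le> pack n (\<epsilon> / c) (eball n \<theta> \<epsilon> \<inter> K)"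
    using assms by (intro card_le_pack[OF _ Int_lower1]) auto
  also have "\<dots> \<le> Mloc n c K \<epsilon>"
    by (rule pack_le_Mloc[OF assms(1,2) \<theta>])
  finally show ?thesis by simp
qed

lemma Mloc_0:
  assumes "K \<subseteq> Rn n" "K \<noteq> {}"
  shows "Mloc n c K 0 = 1"
proof -
  have "pack n (0 / c) (eball n \<theta> 0 \<inter> K) = 1" if \<theta>: "\<theta> \<in> K" for \<theta>
  proof -
    have "eball n \<theta> 0 \<inter> K = {\<theta>}"
    proof (intro equalityI subsetI)
      fix x
      assume x: "x \<in> eball n \<theta> 0 \<inter> K"
      then have "edist n \<theta> x = 0"
        using edist_nonneg[of n \<theta> x] by (simp add: eball_def)
      then show "x \<in> {\<theta>}"
        using edist_eq_0_imp_eq[of \<theta> n x] x \<theta> assms(1) by (auto simp: eball_def)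
    next
      fix x
      assume "x \<in> {\<theta>}"
      then show "x \<in> eball n \<theta> 0 \<inter> K"
        using \<theta> assms(1) by (auto simp: eball_def)
    qed
    moreover have "packings n 0 {\<theta>} = {{}, {\<theta>}}"
      unfolding packings_def by (auto simp: subset_singleton_iff)
    moreover have "Sup {0, 1 :: real} = 1"
      by (rule cSup_eq_maximum) auto
    ultimately show ?thesis
      by (simp add: pack_eq_SUP)
  qed
  then show ?thesis
    unfolding Mloc_def using assms(2) by (simp cong: SUP_cong)
qed

lemma packing_contraction:
  fixes \<theta> :: "nat \<Rightarrow> real"
  assumes K: "K \<subseteq> Rn n" "econvex K" "\<theta> \<in> K" and t: "0 < t" "t \<le> 1"
    and S: "S \<in> packings n \<eta> (eball n \<theta> r \<inter> K)"
  defines "\<phi> \<equiv> \<lambda>x i. t * x i + (1 - t) * \<theta> i"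
  shows "inj_on \<phi> S" "\<phi> ` S \<in> packings n (t * \<eta>) (eball n \<theta> (t * r) \<inter> K)"
proof -
  show inj: "inj_on \<phi> S"
  proof (rule inj_onI)
    fix x y
    assume eq: "\<phi> x = \<phi> y"
    have "t * x i = t * y i" for i
      using fun_cong[OF eq, of i] by (simp add: \<phi>_def)
    then show "x = y"
      using t by auto
  qed
  have "\<phi> x \<in> eball n \<theta> (t * r) \<inter> K" if "x \<in> S" for x
  proof -
    have x: "x \<in> K" "edist n \<theta> x \<le> r"
      using S that by (auto simp: packings_def eball_def)
    then have "\<phi> x \<in> K"
      using K t unfolding econvex_def \<phi>_def by auto
    moreover have "edist n \<theta> (\<phi> x) \<le> t * r"
      using x t edist_affine_combination_centre[of n \<theta> t x] by (simp add: \<phi>_def)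
    ultimately show ?thesis
      using K by (auto simp: eball_def)
  qed
  moreover have "t * \<eta> < edist n (\<phi> x) (\<phi> y)" if "x \<in> S" "y \<in> S" "x \<noteq> y" for x y
    using S that t edist_affine_combination[of n t x \<theta> y]
    by (auto simp: packings_def \<phi>_def)
  ultimately show "\<phi> ` S \<in> packings n (t * \<eta>) (eball n \<theta> (t * r) \<inter> K)"
    using S inj by (auto simp: packings_def inj_on_eq_iff)
qed

lemma Mloc_antimono:
  assumes c: "0 < c" and \<epsilon>: "0 < \<epsilon>'" "\<epsilon>' \<le> \<epsilon>"
    and K: "K \<subseteq> Rn n" "K \<noteq> {}" "econvex K"
  shows "Mloc n c K \<epsilon> \<le> Mloc n c K \<epsilon>'"
  unfolding Mloc_def[of n c K \<epsilon>]
proof (rule cSUP_least[OF K(2)])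
  fix \<theta>
  assume \<theta>: "\<theta> \<in> K"
  define t where "t = \<epsilon>' / \<epsilon>"
  have t: "0 < t" "t \<le> 1" "t * \<epsilon> = \<epsilon>'" "t * (\<epsilon> / c) = \<epsilon>' / c"
    using \<epsilon> by (auto simp: t_def)
  have "real (card S) \<le> Mloc n c K \<epsilon>'"
    if S: "S \<in> packings n (\<epsilon> / c) (eball n \<theta> \<epsilon> \<inter> K)" for S
  proof -
    note contraction = packing_contraction[OF K(1,3) \<theta> t(1,2) S]
    have "real (card S) = real (card ((\<lambda>x i. t * x i + (1 - t) * \<theta> i) ` S))"
      using contraction(1) by (simp add: card_image)
    also have "\<dots> \<le> pack n (\<epsilon>' / c) (eball n \<theta> \<epsilon>' \<inter> K)"
      using contraction(2) c \<epsilon> t by (intro card_le_pack[OF _ Int_lower1]) auto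
    also have "\<dots> \<le> Mloc n c K \<epsilon>'"
      by (rule pack_le_Mloc[OF c \<epsilon>(1) \<theta>])
    finally show ?thesis .
  qed
  then show "pack n (\<epsilon> / c) (eball n \<theta> \<epsilon> \<inter> K) \<le> Mloc n c K \<epsilon>'"
    unfolding pack_eq_SUP by (intro cSUP_least) auto
qed

lemma sup0_scaled_le:
  fixes A B :: "real set"
  assumes s: "0 < s" and B: "bdd_above B" "0 \<le> sup0 B"
    and AB: "\<And>x. x \<in> A \<Longrightarrow> 0 < x \<Longrightarrow> s * x \<in> B"
  shows "s * sup0 A \<le> sup0 B"
proof (cases "A = {}")
  case True
  then show ?thesis
    using B(2) by (simp add: sup0_def)
next
  case False
  have "x \<le> sup0 B / s" if "x \<in> A" for x
  proof (cases "0 < x")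
    case True
    then have "s * x \<in> B"
      using AB that by blast
    then have "s * x \<le> sup0 B"
      using B(1) by (auto simp: sup0_def intro: cSup_upper)
    then show ?thesis
      using s by (simp add: field_simps)
  next
    case False
    then show ?thesis
      using s B(2) by (smt (verit) divide_nonneg_pos)
  qed
  then have "Sup A \<le> sup0 B / s"
    using \<open>A \<noteq> {}\<close> by (rule_tac cSup_least) auto
  then show ?thesis
    using False s by (simp add: sup0_def field_simps)
qed

locale entropy_profile =
  fixes f :: "real \<Rightarrow> real"
  assumes nonneg: "0 < \<epsilon> \<Longrightarrow> 0 \<le> f \<epsilon>"
    and antimono: "0 < \<epsilon>' \<Longrightarrow> \<epsilon>' \<le> \<epsilon> \<Longrightarrow> f \<epsilon> \<le> f \<epsilon>'"
    and at_0: "f 0 = 0"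
begin

lemma critical_set_bounded:
  assumes "0 < \<sigma>"
  shows "bdd_above {\<epsilon>. \<epsilon>^2 / \<sigma>^2 \<le> f \<epsilon>}"
proof (rule bdd_aboveI)
  fix \<epsilon>
  assume \<epsilon>: "\<epsilon> \<in> {\<epsilon>. \<epsilon>^2 / \<sigma>^2 \<le> f \<epsilon>}"
  show "\<epsilon> \<le> max 1 (\<sigma>^2 * f 1)"
  proof (cases "\<epsilon> \<le> 1")
    case False
    have "\<epsilon> \<le> \<epsilon>^2"
      using False by (simp add: power2_eq_square)
    also have "\<dots> \<le> \<sigma>^2 * f \<epsilon>"
      using \<epsilon> assms by (simp add: field_simps)
    also have "\<dots> \<le> \<sigma>^2 * f 1"
      using False antimono[of 1 \<epsilon>] by (intro mult_left_mono) auto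
    finally show ?thesis by simp
  qed simp
qed

lemma sup0_critical_set_nonneg:
  assumes "0 < \<sigma>"
  shows "0 \<le> sup0 {\<epsilon>. \<epsilon>^2 / \<sigma>^2 \<le> f \<epsilon>}"
  using critical_set_bounded[OF assms] at_0 by (auto simp: sup0_def intro: cSup_upper)

lemma rescaled_into_critical_set:
  assumes "0 < \<sigma>" "0 < C1" "0 < C2" "0 < \<epsilon>" "\<epsilon>^2 / \<sigma>^2 \<le> C1 * f (C2 * \<epsilon>)"
  defines "m \<equiv> max 1 (sqrt (C1 * C2^2))"
  shows "(C2 / m * \<epsilon>)^2 / \<sigma>^2 \<le> f (C2 / m * \<epsilon>)"
proof -
  have "sqrt (C1 * C2^2) \<le> m"
    by (simp add: m_def)
  then have m: "1 \<le> m" "C1 * C2^2 \<le> m^2"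
    using assms(2) power_mono[of "sqrt (C1 * C2^2)" m 2] by (auto simp: m_def)
  have "(C2 / m * \<epsilon>)^2 / \<sigma>^2 = C2^2 / m^2 * (\<epsilon>^2 / \<sigma>^2)"
    by (simp add: power_mult_distrib power_divide)
  also have "\<dots> \<le> C2^2 / m^2 * (C1 * f (C2 * \<epsilon>))"
    using assms(5) by (intro mult_left_mono) auto
  also have "\<dots> = (C1 * C2^2) / m^2 * f (C2 * \<epsilon>)"
    by simp
  also have "\<dots> \<le> 1 * f (C2 * \<epsilon>)"
    using m assms(3,4) nonneg[of "C2 * \<epsilon>"] by (intro mult_right_mono) auto
  also have "\<dots> \<le> f (C2 / m * \<epsilon>)"
  proof -
    have "C2 * \<epsilon> / m \<le> C2 * \<epsilon>"
      using m mult_pos_pos[OF assms(3,4)] by (simp add: divide_le_eq mult_le_cancel_left1)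
    then show ?thesis
      using m assms(3,4) antimono[of "C2 * \<epsilon> / m" "C2 * \<epsilon>"] by simp
  qed
  finally show ?thesis .
qed

lemma rescaled_radius_le:
  assumes "0 < \<sigma>" "0 < C1" "0 < C2"
  shows "C2 / max 1 (sqrt (C1 * C2^2)) * sup0 {\<epsilon>. 0 < \<epsilon> \<and> \<epsilon>^2 / \<sigma>^2 \<le> C1 * f (C2 * \<epsilon>)}
    \<le> sup0 {\<epsilon>. \<epsilon>^2 / \<sigma>^2 \<le> f \<epsilon>}"
proof (rule sup0_scaled_le)
  show "C2 / max 1 (sqrt (C1 * C2^2)) * \<epsilon> \<in> {\<epsilon>. \<epsilon>^2 / \<sigma>^2 \<le> f \<epsilon>}"
    if "\<epsilon> \<in> {\<epsilon>. 0 < \<epsilon> \<and> \<epsilon>^2 / \<sigma>^2 \<le> C1 * f (C2 * \<epsilon>)}" for \<epsilon>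
    using that assms rescaled_into_critical_set[of \<sigma> C1 C2 \<epsilon>] by simp
qed (use assms critical_set_bounded sup0_critical_set_nonneg in auto)

lemma critical_into_rescaled_set:
  assumes "0 < C1" "0 < C2" "0 < \<epsilon>" "\<epsilon>^2 / \<sigma>^2 \<le> f \<epsilon>"
  defines "\<mu> \<equiv> min 1 (sqrt (C1 * C2^2))"
  shows "(\<mu> / C2 * \<epsilon>)^2 / \<sigma>^2 \<le> C1 * f (C2 * (\<mu> / C2 * \<epsilon>))"
proof -
  have "\<mu> \<le> sqrt (C1 * C2^2)"
    by (simp add: \<mu>_def)
  then have \<mu>: "0 < \<mu>" "\<mu> \<le> 1" "\<mu>^2 / C2^2 \<le> C1"
    using assms(1,2) power_mono[of \<mu> "sqrt (C1 * C2^2)" 2]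
    by (auto simp: \<mu>_def divide_le_eq)
  have "(\<mu> / C2 * \<epsilon>)^2 / \<sigma>^2 = \<mu>^2 / C2^2 * (\<epsilon>^2 / \<sigma>^2)"
    by (simp add: power_mult_distrib power_divide)
  also have "\<dots> \<le> \<mu>^2 / C2^2 * f \<epsilon>"
    using assms(4) by (intro mult_left_mono) auto
  also have "\<dots> \<le> C1 * f \<epsilon>"
    using \<mu>(3) nonneg[OF assms(3)] by (rule mult_right_mono)
  also have "\<dots> \<le> C1 * f (\<mu> * \<epsilon>)"
    using \<mu> assms(1,3) antimono[of "\<mu> * \<epsilon>" \<epsilon>] by (simp add: mult_le_cancel_right1)
  finally show ?thesis
    using assms(2) by simp
qed

lemma radius_le_rescaled:
  assumes "0 < \<sigma>" "0 < C1" "0 < C2"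
  shows "sup0 {\<epsilon>. \<epsilon>^2 / \<sigma>^2 \<le> f \<epsilon>}
    \<le> C2 / min 1 (sqrt (C1 * C2^2)) * sup0 {\<epsilon>. 0 < \<epsilon> \<and> \<epsilon>^2 / \<sigma>^2 \<le> C1 * f (C2 * \<epsilon>)}"
    (is "sup0 ?A \<le> _ * sup0 ?D")
proof -
  define m where "m = max 1 (sqrt (C1 * C2^2))"
  define \<mu> where "\<mu> = min 1 (sqrt (C1 * C2^2))"
  have m: "0 < m" and \<mu>: "0 < \<mu> / C2"
    using assms by (auto simp: m_def \<mu>_def)
  obtain B where B: "\<And>x. x \<in> ?A \<Longrightarrow> x \<le> B"
    using critical_set_bounded[OF assms(1)] by (auto simp: bdd_above_def)
  have "bdd_above ?D"
  proof (rule bdd_aboveI)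
    fix \<epsilon> assume "\<epsilon> \<in> ?D"
    then have "C2 / m * \<epsilon> \<le> B"
      using assms rescaled_into_critical_set[of \<sigma> C1 C2 \<epsilon>] by (intro B) (simp add: m_def)
    then show "\<epsilon> \<le> B / (C2 / m)"
      using m assms(3) by (simp add: field_simps)
  qed
  moreover have "0 \<le> sup0 ?D"
    using calculation by (auto simp: sup0_def intro: cSup_upper2)
  moreover have "\<mu> / C2 * \<epsilon> \<in> ?D" if "\<epsilon> \<in> ?A" "0 < \<epsilon>" for \<epsilon>
    using that assms \<mu> critical_into_rescaled_set[of C1 C2 \<epsilon> \<sigma>] by (simp add: \<mu>_def)
  ultimately have "\<mu> / C2 * sup0 ?A \<le> sup0 ?D"
    using \<mu> by (intro sup0_scaled_le)
  then show ?thesis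
    using \<mu> assms(3) by (simp add: \<mu>_def field_simps)
qed

end

lemma ln_Mloc_entropy_profile:
  assumes "0 < c" "K \<subseteq> Rn n" "K \<noteq> {}" "econvex K"
  shows "entropy_profile (\<lambda>\<epsilon>. ln (Mloc n c K \<epsilon>))"
proof
  fix \<epsilon> \<epsilon>' :: real
  show "0 < \<epsilon> \<Longrightarrow> 0 \<le> ln (Mloc n c K \<epsilon>)"
    using Mloc_ge_1 assms by simp
  show "ln (Mloc n c K \<epsilon>) \<le> ln (Mloc n c K \<epsilon>')" if "0 < \<epsilon>'" "\<epsilon>' \<le> \<epsilon>"
    using that assms Mloc_antimono[of c \<epsilon>' \<epsilon> K n] Mloc_ge_1[of c \<epsilon> K n] by simp
  show "ln (Mloc n c K 0) = 0"
    using Mloc_0 assms by simp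
qed

theorem mainTheorem15:
  shows "\<exists>c0>0. \<forall>c\<ge>c0. \<forall>C1>0. \<forall>C2>0. \<exists>a>0. \<exists>b>0.
    \<forall>(n::nat) (K::(nat \<Rightarrow> real) set) (\<sigma>::real).
      K \<subseteq> Rn n \<and> K \<noteq> {} \<and> econvex K \<and> eclosed n K \<and> \<sigma> > 0 \<longrightarrow>
      a * eps_dagger n c K \<sigma> C1 C2 \<le> eps_star n c K \<sigma> \<and>
      eps_star n c K \<sigma> \<le> b * eps_dagger n c K \<sigma> C1 C2"
proof (rule exI[of _ 1], intro conjI zero_less_one allI impI)
  fix c C1 C2 :: real
  assume c: "1 \<le> c" and C1: "0 < C1" and C2: "0 < C2"
  show "\<exists>a>0. \<exists>b>0. \<forall>n K \<sigma>. K \<subseteq> Rn n \<and> K \<noteq> {} \<and> econvex K \<and> eclosed n K \<and> 0 < \<sigma> \<longrightarrow>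
      a * eps_dagger n c K \<sigma> C1 C2 \<le> eps_star n c K \<sigma> \<and>
      eps_star n c K \<sigma> \<le> b * eps_dagger n c K \<sigma> C1 C2"
  proof (rule exI[of _ "C2 / max 1 (sqrt (C1 * C2^2))"],
      intro conjI exI[of _ "C2 / min 1 (sqrt (C1 * C2^2))"] allI impI)
    fix n :: nat and K :: "(nat \<Rightarrow> real) set" and \<sigma> :: real
    assume H: "K \<subseteq> Rn n \<and> K \<noteq> {} \<and> econvex K \<and> eclosed n K \<and> 0 < \<sigma>"
    interpret entropy_profile "\<lambda>\<epsilon>. ln (Mloc n c K \<epsilon>)"
      using H c by (intro ln_Mloc_entropy_profile) auto
    have "0 < \<sigma>"
      using H by simp
    show "C2 / max 1 (sqrt (C1 * C2^2)) * eps_dagger n c K \<sigma> C1 C2 \<le> eps_star n c K \<sigma>"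
      unfolding eps_dagger_def eps_star_def
      using rescaled_radius_le[OF \<open>0 < \<sigma>\<close> C1 C2] .
    show "eps_star n c K \<sigma> \<le> C2 / min 1 (sqrt (C1 * C2^2)) * eps_dagger n c K \<sigma> C1 C2"
      unfolding eps_dagger_def eps_star_def
      using radius_le_rescaled[OF \<open>0 < \<sigma>\<close> C1 C2] .
  qed (use C1 C2 in auto)
qed

end
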